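(* Let $C$ be a $d$-dimensional copula such that for each $j\in\{1,\dots,d\}$ the partial derivative $\dot C_j=\partial C/\partial u_j$ exists and is continuous on $\{\vec u\in[0,1]^d:u_j\in(0,1)\}$ (with $\dot C_j:=0$ on $\{u_j\in\{0,1\}\}$). Let $\alpha^\star_n\in\mathcal D^\star_n$ for every $n$ and $\alpha^\star\in\mathcal D^\star_0$ with $\sup_{\Delta\times[0,1]^d}|\alpha^\star_n-\alpha^\star|\to0$. Then $g_n(\alpha^\star_n)\to g(\alpha^\star)$ uniformly on $\Delta\times[0,1]^d$, where $g(\alpha^\star)(s,t,\vec u)=\alpha^\star(s,t,\vec u)-\sum_{j=1}^d\dot C_j(\vec u)\alpha^\star(s,t,\vec u^{(j)})$.
   Context: $\Delta=\{(s,t)\in[0,1]^2:s\le t\}$, $\lambda_n(s,t)=(\lfloor nt\rfloor-\lfloor ns\rfloor)/n$. $\mathcal E$ is the set of right-continuous nondecreasing $F:[0,1]\to[0,1]$ with $F(0)=0$, $F(1)=1$. $\mathcal E^\star_n$ is the set of $F^\star:\Delta\times[0,1]\to[0,1]$ such that $u\mapsto\lambda_n(s,t)^{-1}F^\star(s,t,u)\in\mathcal E$ when $\lfloor ns\rfloor<\lfloor nt\rfloor$ and $F^\star(s,t,\cdot)=0$ when $\lfloor ns\rfloor=\lfloor nt\rfloor$. For $F^\star\in\mathcal E^\star_n$, $I_n(F^\star)(s,t,u)=\inf\{v\in[0,1]:F^\star(s,t,v)\ge\lambda_n(s,t)u\}$. For $H^\star:\Delta\times[0,1]^d\to\mathbb{R}$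 and $j\in\{1,\dots,d\}$, $H^\star_j(s,t,u)=H^\star(s,t,\vec u_{\{j\}})$ with $\vec u_{\{j\}}$ the vector with $j$th component $u$ and others $1$. $\mathcal E^\star_{n,d}=\{H^\star:\Delta\times[0,1]^d\to[0,1]: H^\star_j\in\mathcal E^\star_n\ \forall j\}$, and $\Phi_n(H^\star)(s,t,\vec u)=H^\star\{s,t,I_n(H^\star_1)(s,t,u_1),\dots,I_n(H^\star_d)(s,t,u_d)\}$. $C^\star_n(s,t,\vec u)=\lambda_n(s,t)C(\vec u)$. $\mathcal D^\star$ is the set of bounded $\alpha^\star$ on $\Delta\times[0,1]^d$ with $\alpha^\star(s,t,\cdot)=0$ if $s=t$, and $\alpha^\star(s,t,\vec u)=0$ if $s<t$ and either some component of $\vec u$ is $0$ or $\vec u=(1,\dots,1)$. $\mathcal D^\star_n=\{\alpha^\star\in\mathcal D^\star:C^\star_n+n^{-1/2}\alpha^\star\in\mathcal E^\star_{n,d}\}$, $\mathcal D^\star_0=\mathcal D^\star\cap\mathcal C(\Delta\times[0,1]^d)$. For $\alpha^\star_n\in\mathcal D^\star_n$, $g_n(\alpha^\star_n)=\sqrt n\{\Phi_n(C^\star_n+n^{-1/2}\alpha^\star_n)-\Phi_n(C^\star_n)\}$. $\vec u^{(j)}$ is the vector with $j$th component $u_j$ and all others $1$. *)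

theory Defs
  imports "HOL-Analysis.Analysis"
begin

text \<open>Vectors in [0,1]^d are modelled as real^'d for a finite index type 'd.
  Functions on Delta x [0,1]^d are curried: s t u.\<close>

definition unit_cube :: "(real^'d) set" where
  "unit_cube = {u. \<forall>j. 0 \<le> u$j \<and> u$j \<le> 1}"

definition Delta :: "(real \<times> real) set" where
  "Delta = {(s,t). 0 \<le> s \<and> s \<le> t \<and> t \<le> 1}"

definition lam :: "nat \<Rightarrow> real \<Rightarrow> real \<Rightarrow> real" where
  "lam n s t = (real_of_int \<lfloor>real n * t\<rfloor> - real_of_int \<lfloor>real n * s\<rfloor>) / real n"

definition vec1 :: "'d \<Rightarrow> real \<Rightarrow> real^'d" where
  "vec1 j x = (\<chi> i. if i = j then x else 1)"

definition is_copula :: "(real^'d \<Rightarrow> real) \<Rightarrow> bool" where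
  "is_copula C \<longleftrightarrow>
     (\<forall>u\<in>unit_cube. (\<exists>j. u$j = 0) \<longrightarrow> C u = 0) \<and>
     (\<forall>j. \<forall>x\<in>{0..1}. C (vec1 j x) = x) \<and>
     (\<forall>a\<in>unit_cube. \<forall>b\<in>unit_cube. (\<forall>i. a$i \<le> b$i) \<longrightarrow>
        0 \<le> (\<Sum>S\<in>Pow (UNIV::'d set).
               (-1) ^ card (UNIV - S) * C (\<chi> i. if i \<in> S then b$i else a$i)))"

definition pdC :: "(real^'d \<Rightarrow> real) \<Rightarrow> 'd \<Rightarrow> real^'d \<Rightarrow> real" where
  "pdC C j u = (if 0 < u$j \<and> u$j < 1
      then deriv (\<lambda>x. C (\<chi> i. if i = j then x else u$i)) (u$j) else 0)"

definition isE :: "(real \<Rightarrow> real) \<Rightarrow> bool" where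
  "isE F \<longleftrightarrow> (\<forall>x\<in>{0..1}. F x \<in> {0..1}) \<and> mono_on {0..1} F \<and>
     (\<forall>x\<in>{0..1}. continuous (at x within {x..1}) F) \<and> F 0 = 0 \<and> F 1 = 1"

definition isEstar :: "nat \<Rightarrow> (real \<Rightarrow> real \<Rightarrow> real \<Rightarrow> real) \<Rightarrow> bool" where
  "isEstar n F \<longleftrightarrow> (\<forall>(s,t)\<in>Delta.
      (\<forall>u\<in>{0..1}. F s t u \<in> {0..1}) \<and>
      (if \<lfloor>real n * s\<rfloor> < \<lfloor>real n * t\<rfloor>
       then isE (\<lambda>u. F s t u / lam n s t)
       else (\<forall>u\<in>{0..1}. F s t u = 0)))"

definition In :: "nat \<Rightarrow> (real \<Rightarrow> real \<Rightarrow> real \<Rightarrow> real) \<Rightarrow> real \<Rightarrow> real \<Rightarrow> real \<Rightarrow> real" where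
  "In n F s t u = Inf {v \<in> {0..1}. F s t v \<ge> lam n s t * u}"

definition marg :: "(real \<Rightarrow> real \<Rightarrow> real^'d \<Rightarrow> real) \<Rightarrow> 'd \<Rightarrow> real \<Rightarrow> real \<Rightarrow> real \<Rightarrow> real" where
  "marg H j s t x = H s t (vec1 j x)"

definition isEstar_d :: "nat \<Rightarrow> (real \<Rightarrow> real \<Rightarrow> real^'d \<Rightarrow> real) \<Rightarrow> bool" where
  "isEstar_d n H \<longleftrightarrow> (\<forall>(s,t)\<in>Delta. \<forall>u\<in>unit_cube. H s t u \<in> {0..1}) \<and>
     (\<forall>j. isEstar n (marg H j))"

definition Phi :: "nat \<Rightarrow> (real \<Rightarrow> real \<Rightarrow> real^'d \<Rightarrow> real) \<Rightarrow> real \<Rightarrow> real \<Rightarrow> real^'d \<Rightarrow> real" where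
  "Phi n H s t u = H s t (\<chi> j. In n (marg H j) s t (u$j))"

definition Cstar :: "nat \<Rightarrow> (real^'d \<Rightarrow> real) \<Rightarrow> real \<Rightarrow> real \<Rightarrow> real^'d \<Rightarrow> real" where
  "Cstar n C s t u = lam n s t * C u"

definition Dstar :: "(real \<Rightarrow> real \<Rightarrow> real^'d \<Rightarrow> real) \<Rightarrow> bool" where
  "Dstar a \<longleftrightarrow> (\<exists>B. \<forall>(s,t)\<in>Delta. \<forall>u\<in>unit_cube. \<bar>a s t u\<bar> \<le> B) \<and>
     (\<forall>(s,t)\<in>Delta. \<forall>u\<in>unit_cube.
        (s = t \<longrightarrow> a s t u = 0) \<and>
        (s < t \<and> ((\<exists>j. u$j = 0) \<or> u = (\<chi> j. 1)) \<longrightarrow> a s t u = 0))"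

definition Dstar_n :: "nat \<Rightarrow> (real^'d \<Rightarrow> real) \<Rightarrow> (real \<Rightarrow> real \<Rightarrow> real^'d \<Rightarrow> real) \<Rightarrow> bool" where
  "Dstar_n n C a \<longleftrightarrow> Dstar a \<and>
     isEstar_d n (\<lambda>s t u. Cstar n C s t u + a s t u / sqrt (real n))"

definition Dstar0 :: "(real \<Rightarrow> real \<Rightarrow> real^'d \<Rightarrow> real) \<Rightarrow> bool" where
  "Dstar0 a \<longleftrightarrow> Dstar a \<and>
     continuous_on {((s,t),u). (s,t) \<in> Delta \<and> u \<in> unit_cube} (\<lambda>((s,t),u). a s t u)"

definition gn :: "nat \<Rightarrow> (real^'d \<Rightarrow> real) \<Rightarrow> (real \<Rightarrow> real \<Rightarrow> real^'d \<Rightarrow> real) \<Rightarrow> real \<Rightarrow> real \<Rightarrow> real^'d \<Rightarrow> real" where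
  "gn n C a s t u = sqrt (real n) *
     (Phi n (\<lambda>s t u. Cstar n C s t u + a s t u / sqrt (real n)) s t u - Phi n (Cstar n C) s t u)"

definition glim :: "(real^'d \<Rightarrow> real) \<Rightarrow> (real \<Rightarrow> real \<Rightarrow> real^'d \<Rightarrow> real) \<Rightarrow> real \<Rightarrow> real \<Rightarrow> real^'d \<Rightarrow> real" where
  "glim C a s t u = a s t u - (\<Sum>j\<in>UNIV. pdC C j u * a s t (\<chi> i. if i = j then u$i else 1))"

end

theory Submission
  imports Defs
begin

text \<open>Fix (s,t) with \<lfloor>ns\<rfloor> < \<lfloor>nt\<rfloor> and write \<beta> = \<alpha>*_n(s,t,.). The j-th margin of
  C*_n + n^(-1/2) \<alpha>*_n is v \<mapsto> \<lambda>_n v + n^(-1/2) \<beta>(v^(j)), so with c = \<surd>n \<lambda>_n its quantile q_j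
  at u_j is a generalised inverse of v \<mapsto> c v + \<beta>(v^(j)), and g_n = c (C(q) - C(u)) + \<beta>(q).
  Since \<beta> is bounded, c |q_j - u_j| is bounded, so q is close to u once c is large, and then
  c (q_j - u_j) \<approx> -\<alpha>(u^(j)) by the continuity of \<alpha>. A first-order expansion of C, uniform where
  u_j stays away from {0,1} and replaced by the Lipschitz bound near {0,1}, where \<alpha>(u^(j)) \<approx> 0,
  turns c (C(q) - C(u)) into -\<Sigma>_j dC_j(u) \<alpha>(u^(j)) up to a small error. If c is not large, then
  t - s is small, so \<alpha>(s,t,.) \<approx> \<alpha>(s,s,.) = 0 and both g_n and g are small. Finally, where
  \<lfloor>ns\<rfloor> = \<lfloor>nt\<rfloor>, g_n vanishes and t - s < 1/n.\<close>

definition vec_upd :: "real^'d \<Rightarrow> 'd \<Rightarrow> real \<Rightarrow> real^'d" where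
  "vec_upd x j c = (\<chi> i. if i = j then c else x$i)"

lemma vec_upd_nth [simp]: "vec_upd x j c $ i = (if i = j then c else x$i)"
  by (simp add: vec_upd_def)

lemma vec_upd_in_unit_cube: "x \<in> unit_cube \<Longrightarrow> c \<in> {0..1} \<Longrightarrow> vec_upd x j c \<in> unit_cube"
  by (simp add: unit_cube_def)

lemma vec1_in_unit_cube: "c \<in> {0..1} \<Longrightarrow> vec1 j c \<in> unit_cube"
  by (simp add: vec1_def unit_cube_def)

lemma vec1_one: "vec1 j 1 = (\<chi> i. 1)"
  by (simp add: vec1_def vec_eq_iff)

lemma unit_cube_eq_cbox: "unit_cube = cbox (0::real^'d) (\<chi> i. 1)"
  by (auto simp: unit_cube_def mem_box_cart)

lemma dist_le_sum_abs_cart: "dist (x::real^'d) y \<le> (\<Sum>i\<in>UNIV. \<bar>x$i - y$i\<bar>)"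
  using norm_le_l1_cart[of "x - y"] by (simp add: dist_norm)

lemma dist_vec1: "dist (vec1 j v) (vec1 j w :: real^'d) \<le> \<bar>v - w\<bar>"
proof -
  have "(\<Sum>i\<in>UNIV. \<bar>vec1 j v $ i - vec1 j w $ i\<bar>) = (\<Sum>i\<in>UNIV. if i = j then \<bar>v - w\<bar> else 0)"
    by (intro sum.cong) (auto simp: vec1_def)
  then show ?thesis
    using dist_le_sum_abs_cart[of "vec1 j v" "vec1 j w"] by simp
qed

lemma compact_Delta: "compact Delta"
proof -
  have "Delta = {p. 0 \<le> fst p} \<inter> {p. fst p \<le> snd p} \<inter> {p::real\<times>real. snd p \<le> 1}"
    by (auto simp: Delta_def)
  moreover have "closed \<dots>"
    by (intro closed_Int closed_Collect_le continuous_intros)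
  moreover have "Delta \<subseteq> cbox (0,0) (1,1)"
    by (auto simp: Delta_def cbox_Pair_eq)
  ultimately show ?thesis
    by (metis compact_cbox compact_Int_closed inf.absorb_iff2)
qed

lemma abs_sum_le_card_mult:
  fixes f :: "'d::finite \<Rightarrow> real"
  assumes "\<And>j. \<bar>f j\<bar> \<le> m"
  shows "\<bar>\<Sum>j\<in>UNIV. f j\<bar> \<le> real CARD('d) * m"
  by (rule order_trans[OF sum_abs]) (use sum_bounded_above[of UNIV "\<lambda>j. \<bar>f j\<bar>" m] assms in simp)

section \<open>Copulas\<close>

text \<open>The C-volume of a box whose lower corner vanishes outside K only involves the vertices that
  take the upper corner outside K; the others lie on a face where C is 0.\<close>
lemma copula_volume_nonneg_restrict:
  fixes C :: "real^'d \<Rightarrow> real"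
  assumes cop: "is_copula C" and a: "a \<in> unit_cube" and b: "b \<in> unit_cube"
    and ab: "\<forall>i. a$i \<le> b$i" and zero: "\<forall>k. k \<notin> K \<longrightarrow> a$k = 0"
  shows "0 \<le> (\<Sum>S\<in>{S. UNIV - K \<subseteq> S}.
               (-1) ^ card (UNIV - S) * C (\<chi> i. if i \<in> S then b$i else a$i))"
proof -
  have grounded: "\<forall>u\<in>unit_cube. (\<exists>j. u$j = 0) \<longrightarrow> C u = 0"
    using cop by (simp add: is_copula_def)
  have "0 \<le> (\<Sum>S\<in>Pow (UNIV::'d set).
               (-1) ^ card (UNIV - S) * C (\<chi> i. if i \<in> S then b$i else a$i))"
    using cop a b ab by (simp add: is_copula_def)
  also have "\<dots> = (\<Sum>S\<in>{S. UNIV - K \<subseteq> S}.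
               (-1) ^ card (UNIV - S) * C (\<chi> i. if i \<in> S then b$i else a$i))"
  proof (rule sum.mono_neutral_right)
    show "\<forall>S\<in>Pow UNIV - {S. UNIV - K \<subseteq> S}.
       (- 1) ^ card (UNIV - S) * C (\<chi> i. if i \<in> S then b $ i else a $ i) = 0"
    proof
      fix S assume "S \<in> Pow UNIV - {S. UNIV - K \<subseteq> (S::'d set)}"
      then obtain k where "k \<notin> K" "k \<notin> S" by auto
      moreover have "(\<chi> i. if i \<in> S then b$i else a$i) \<in> unit_cube"
        using a b by (auto simp: unit_cube_def)
      ultimately show "(- 1) ^ card (UNIV - S) * C (\<chi> i. if i \<in> S then b $ i else a $ i) = 0"
        using grounded zero by fastforce
    qed
  qed auto
  finally show ?thesis .
qed

lemma copula_mono_coord: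
  fixes C :: "real^'d \<Rightarrow> real"
  assumes cop: "is_copula C" and x: "x \<in> unit_cube" and yz: "0 \<le> y" "y \<le> z" "z \<le> 1"
  shows "C (vec_upd x j y) \<le> C (vec_upd x j z)"
proof -
  let ?a = "vec_upd 0 j y" and ?b = "vec_upd x j z"
  have faces: "{S. UNIV - {j} \<subseteq> S} = {UNIV, UNIV - {j}}" by auto
  have "0 \<le> (\<Sum>S\<in>{S. UNIV - {j} \<subseteq> S}.
               (-1) ^ card (UNIV - S) * C (\<chi> i. if i \<in> S then ?b$i else ?a$i))"
    by (rule copula_volume_nonneg_restrict[OF cop]) (use x yz in \<open>auto simp: unit_cube_def\<close>)
  also have "\<dots> = C ?b - C (vec_upd x j y)"
  proof -
    have "UNIV \<noteq> UNIV - {j}" by auto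
    moreover have "UNIV - (UNIV - {j}) = {j}" by auto
    moreover have "(\<chi> i. if i \<in> UNIV then ?b$i else ?a$i) = ?b"
      "(\<chi> i. if i \<in> UNIV - {j} then ?b$i else ?a$i) = vec_upd x j y"
      by (simp_all add: vec_eq_iff)
    ultimately show ?thesis unfolding faces by simp
  qed
  finally show ?thesis by simp
qed

lemma sum_four_distinct:
  "A \<noteq> B \<Longrightarrow> A \<noteq> C \<Longrightarrow> A \<noteq> D \<Longrightarrow> B \<noteq> C \<Longrightarrow> B \<noteq> D \<Longrightarrow> C \<noteq> D \<Longrightarrow>
    (\<Sum>S\<in>{A,B,C,D}. f S) = f A + f B + f C + f D"
  by (simp add: algebra_simps)

lemma copula_increment_mono:
  fixes C :: "real^'d \<Rightarrow> real"
  assumes cop: "is_copula C" and x: "x \<in> unit_cube" and yz: "0 \<le> y" "y \<le> z" "z \<le> 1"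
    and pq: "0 \<le> p" "p \<le> q" "q \<le> 1" and ij: "i \<noteq> j"
  shows "C (vec_upd (vec_upd x i p) j z) - C (vec_upd (vec_upd x i p) j y)
       \<le> C (vec_upd (vec_upd x i q) j z) - C (vec_upd (vec_upd x i q) j y)"
proof -
  let ?a = "vec_upd (vec_upd 0 i p) j y" and ?b = "vec_upd (vec_upd x i q) j z"
  have faces: "{S. UNIV - {i,j} \<subseteq> S} = {UNIV, UNIV - {i}, UNIV - {j}, UNIV - {i,j}}" by auto
  have "0 \<le> (\<Sum>S\<in>{S. UNIV - {i,j} \<subseteq> S}.
               (-1) ^ card (UNIV - S) * C (\<chi> k. if k \<in> S then ?b$k else ?a$k))"
    by (rule copula_volume_nonneg_restrict[OF cop]) (use x yz pq in \<open>auto simp: unit_cube_def\<close>)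
  also have "\<dots> = C ?b - C (vec_upd (vec_upd x i q) j y)
                 - (C (vec_upd (vec_upd x i p) j z) - C (vec_upd (vec_upd x i p) j y))"
  proof -
    have card: "UNIV - (UNIV - {i}) = {i}" "UNIV - (UNIV - {j}) = {j}"
      "UNIV - (UNIV - {i,j}) = {i,j}"
      by auto
    have vertices: "(\<chi> k. if k \<in> UNIV then ?b$k else ?a$k) = ?b"
      "(\<chi> k. if k \<in> UNIV - {i} then ?b$k else ?a$k) = vec_upd (vec_upd x i p) j z"
      "(\<chi> k. if k \<in> UNIV - {j} then ?b$k else ?a$k) = vec_upd (vec_upd x i q) j y"
      "(\<chi> k. if k \<in> UNIV - {i,j} then ?b$k else ?a$k) = vec_upd (vec_upd x i p) j y"
      using ij by (simp_all add: vec_eq_iff)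
    have distinct: "UNIV \<noteq> UNIV - {i}" "UNIV \<noteq> UNIV - {j}" "UNIV \<noteq> UNIV - {i,j}"
       "UNIV - {i} \<noteq> UNIV - {j}" "UNIV - {i} \<noteq> UNIV - {i,j}" "UNIV - {j} \<noteq> UNIV - {i,j}"
      using ij by auto
    show ?thesis
      unfolding faces sum_four_distinct[OF distinct] by (simp only: card vertices, simp add: card_insert_if ij)
  qed
  finally show ?thesis by simp
qed

text \<open>Raising the other coordinates to 1 one at a time can only increase the increment, and at
  the top the increment is that of a uniform margin.\<close>
lemma copula_increment_le:
  fixes C :: "real^'d \<Rightarrow> real"
  assumes cop: "is_copula C" and x: "x \<in> unit_cube" and yz: "0 \<le> y" "y \<le> z" "z \<le> 1"
  shows "C (vec_upd x j z) - C (vec_upd x j y) \<le> z - y"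
proof -
  define g where "g w = C (vec_upd w j z) - C (vec_upd w j y)" for w
  define top where "top T = (\<chi> i. if i \<in> T then 1 else x$i)" for T
  have top_cube: "top T \<in> unit_cube" for T
    using x by (auto simp: top_def unit_cube_def)
  have "g x \<le> g (top T)" if "finite T" for T
    using that
  proof (induction T rule: finite_induct)
    case empty
    then show ?case by (simp add: top_def vec_eq_iff)
  next
    case (insert i T)
    have "g (top T) \<le> g (top (insert i T))"
    proof (cases "i = j")
      case True
      then have "vec_upd (top (insert i T)) j c = vec_upd (top T) j c" for c
        by (simp add: top_def vec_eq_iff)
      then show ?thesis by (simp add: g_def)
    next
      case False
      have "0 \<le> top T $ i" "top T $ i \<le> 1"
        using top_cube[of T] by (auto simp: unit_cube_def)
      then have "g (vec_upd (top T) i (top T $ i)) \<le> g (vec_upd (top T) i 1)"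
        unfolding g_def by (rule copula_increment_mono[OF cop top_cube yz]) (use False in auto)
      moreover have "top (insert i T) = vec_upd (top T) i 1" "top T = vec_upd (top T) i (top T $ i)"
        by (simp_all add: top_def vec_eq_iff)
      ultimately show ?thesis by simp
    qed
    with insert show ?case by simp
  qed
  then have "g x \<le> g (top UNIV)" by simp
  moreover have "vec_upd (top UNIV) j c = vec1 j c" for c
    by (simp add: top_def vec1_def vec_eq_iff)
  moreover have "C (vec1 j c) = c" if "c \<in> {0..1}" for c
    using cop that by (simp add: is_copula_def)
  ultimately show ?thesis using yz unfolding g_def by simp
qed

lemma copula_lipschitz_coord:
  fixes C :: "real^'d \<Rightarrow> real"
  assumes cop: "is_copula C" and x: "x \<in> unit_cube" and y: "y \<in> {0..1}" and z: "z \<in> {0..1}"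
  shows "\<bar>C (vec_upd x j z) - C (vec_upd x j y)\<bar> \<le> \<bar>z - y\<bar>"
  using copula_increment_le[OF cop x, of y z j] copula_mono_coord[OF cop x, of y z j]
    copula_increment_le[OF cop x, of z y j] copula_mono_coord[OF cop x, of z y j] y z
  by (cases "y \<le> z") auto

lemma copula_continuous_on_coord:
  fixes C :: "real^'d \<Rightarrow> real"
  assumes cop: "is_copula C" and x: "x \<in> unit_cube"
  shows "continuous_on {0..1} (\<lambda>c. C (vec_upd x j c))"
  unfolding continuous_on_iff
proof (intro ballI allI impI)
  fix c e :: real assume c: "c \<in> {0..1}" and e: "0 < e"
  have "dist (C (vec_upd x j c')) (C (vec_upd x j c)) < e"
    if "c' \<in> {0..1}" "dist c' c < e" for c'
    using copula_lipschitz_coord[OF cop x c that(1), where j=j] that(2) by (simp add: dist_real_def)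
  then show "\<exists>d>0. \<forall>c'\<in>{0..1}. dist c' c < d \<longrightarrow> dist (C (vec_upd x j c')) (C (vec_upd x j c)) < e"
    using e by blast
qed

lemma sum_coordinate_increments_bound:
  fixes C :: "real^'d \<Rightarrow> real"
  assumes u: "u \<in> unit_cube" and v: "v \<in> unit_cube"
    and step: "\<And>j x. x \<in> unit_cube \<Longrightarrow> (\<forall>i. x$i = u$i \<or> x$i = v$i) \<Longrightarrow>
       \<bar>C (vec_upd x j (v$j)) - C (vec_upd x j (u$j)) - P j * (v$j - u$j)\<bar> \<le> E j"
  shows "\<bar>C v - C u - (\<Sum>j\<in>UNIV. P j * (v$j - u$j))\<bar> \<le> (\<Sum>j\<in>UNIV. E j)"
proof -
  define w where "w T = (\<chi> i. if i \<in> T then v$i else u$i)" for T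
  have w_cube: "w T \<in> unit_cube" for T
    using u v by (auto simp: w_def unit_cube_def)
  have "\<bar>C (w T) - C u - (\<Sum>j\<in>T. P j * (v$j - u$j))\<bar> \<le> (\<Sum>j\<in>T. E j)" if "finite T" for T
    using that
  proof (induction T rule: finite_induct)
    case empty
    then show ?case by (simp add: w_def vec_eq_iff)
  next
    case (insert j T)
    have "\<bar>C (vec_upd (w T) j (v$j)) - C (vec_upd (w T) j (u$j)) - P j * (v$j - u$j)\<bar> \<le> E j"
      by (rule step[OF w_cube]) (auto simp: w_def)
    moreover have "w (insert j T) = vec_upd (w T) j (v$j)" "w T = vec_upd (w T) j (u$j)"
      using insert by (simp_all add: w_def vec_eq_iff)
    ultimately have "\<bar>C (w (insert j T)) - C (w T) - P j * (v$j - u$j)\<bar> \<le> E j"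
      by metis
    then show ?case using insert by (simp add: abs_le_iff)
  qed
  moreover have "w UNIV = v" by (simp add: w_def vec_eq_iff)
  ultimately show ?thesis by (metis finite)
qed

lemma copula_lipschitz:
  fixes C :: "real^'d \<Rightarrow> real"
  assumes cop: "is_copula C" and u: "u \<in> unit_cube" and v: "v \<in> unit_cube"
  shows "\<bar>C v - C u\<bar> \<le> (\<Sum>j\<in>UNIV. \<bar>v$j - u$j\<bar>)"
proof -
  have "\<bar>C v - C u - (\<Sum>j\<in>UNIV. 0 * (v$j - u$j))\<bar> \<le> (\<Sum>j\<in>UNIV. \<bar>v$j - u$j\<bar>)"
  proof (rule sum_coordinate_increments_bound[OF u v])
    fix j :: 'd and x :: "real^'d" assume "x \<in> unit_cube"
    moreover have "u$j \<in> {0..1}" "v$j \<in> {0..1}"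
      using u v by (auto simp: unit_cube_def)
    ultimately show "\<bar>C (vec_upd x j (v$j)) - C (vec_upd x j (u$j)) - 0 * (v$j - u$j)\<bar> \<le> \<bar>v$j - u$j\<bar>"
      using copula_lipschitz_coord[OF cop] by simp
  qed
  then show ?thesis by simp
qed

lemma pdC_vec_upd:
  "pdC C j (vec_upd x j c) = (if 0 < c \<and> c < 1 then deriv (\<lambda>w. C (vec_upd x j w)) c else 0)"
proof -
  have "(\<lambda>w. C (\<chi> i. if i = j then w else vec_upd x j c $ i)) = (\<lambda>w. C (vec_upd x j w))"
    by (intro ext arg_cong[where f=C]) (simp add: vec_eq_iff)
  then show ?thesis by (simp add: pdC_def)
qed

locale smooth_copula =
  fixes C :: "real^'d \<Rightarrow> real"
  assumes copula: "is_copula C"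
    and partial_differentiable: "\<And>j u. u \<in> unit_cube \<Longrightarrow> 0 < u$j \<Longrightarrow> u$j < 1 \<Longrightarrow>
      (\<lambda>x. C (\<chi> i. if i = j then x else u$i)) differentiable (at (u$j))"
    and partial_continuous: "\<And>j. continuous_on {u \<in> unit_cube. 0 < u$j \<and> u$j < 1} (pdC C j)"
begin

lemma has_real_derivative_coord:
  assumes x: "x \<in> unit_cube" and c: "0 < c" "c < 1"
  shows "((\<lambda>w. C (vec_upd x j w)) has_real_derivative pdC C j (vec_upd x j c)) (at c)"
proof -
  have "(\<lambda>w. C (\<chi> i. if i = j then w else vec_upd x j c $ i)) = (\<lambda>w. C (vec_upd x j w))"
    by (intro ext arg_cong[where f=C]) (simp add: vec_eq_iff)
  then have "(\<lambda>w. C (vec_upd x j w)) differentiable (at c)"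
    using partial_differentiable[of "vec_upd x j c" j] x c by (simp add: unit_cube_def)
  then show ?thesis
    using c by (simp add: pdC_vec_upd DERIV_deriv_iff_real_differentiable)
qed

lemma abs_pdC_le_1:
  assumes u: "u \<in> unit_cube"
  shows "\<bar>pdC C j u\<bar> \<le> 1"
proof (cases "0 < u$j \<and> u$j < 1")
  case True
  define f where "f w = C (vec_upd u j w)" for w
  have uu: "vec_upd u j (u$j) = u" by (simp add: vec_eq_iff)
  have "(f has_real_derivative pdC C j u) (at (u$j))"
    using has_real_derivative_coord[OF u, of "u$j" j] True uu unfolding f_def by simp
  then have "((\<lambda>h. \<bar>(f (u$j + h) - f (u$j)) / h\<bar>) \<longlongrightarrow> \<bar>pdC C j u\<bar>) (at 0)"
    unfolding DERIV_def by (rule tendsto_rabs)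
  moreover have "eventually (\<lambda>h. \<bar>(f (u$j + h) - f (u$j)) / h\<bar> \<le> 1) (at 0)"
    unfolding eventually_at
  proof (intro exI[of _ "min (u$j) (1 - u$j)"] conjI allI impI ballI)
    fix h :: real assume h: "h \<noteq> 0 \<and> dist h 0 < min (u$j) (1 - u$j)"
    then have "\<bar>f (u$j + h) - f (u$j)\<bar> \<le> \<bar>u$j + h - u$j\<bar>"
      unfolding f_def using True
      by (intro copula_lipschitz_coord[OF copula u]) (auto simp: dist_real_def)
    then show "\<bar>(f (u$j + h) - f (u$j)) / h\<bar> \<le> 1"
      using h by (simp add: abs_divide divide_le_eq_1)
  qed (use True in simp)
  ultimately show ?thesis
    by (rule tendsto_upperbound) simp
qed (auto simp: pdC_def)

lemma mean_value_coord:
  assumes x: "x \<in> unit_cube" and y: "y \<in> {0..1}" and z: "z \<in> {0..1}"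
  shows "\<exists>\<xi>. \<bar>\<xi> - y\<bar> \<le> \<bar>z - y\<bar> \<and>
           C (vec_upd x j z) - C (vec_upd x j y) = pdC C j (vec_upd x j \<xi>) * (z - y)"
proof -
  define f where "f w = C (vec_upd x j w)" for w
  have mvt: "\<exists>\<xi>. p < \<xi> \<and> \<xi> < q \<and> f q - f p = (q - p) * pdC C j (vec_upd x j \<xi>)"
    if pq: "0 \<le> p" "p < q" "q \<le> 1" for p q
  proof -
    have "continuous_on {p..q} f"
      unfolding f_def using pq
      by (intro continuous_on_subset[OF copula_continuous_on_coord[OF copula x]]) auto
    moreover have deriv: "(f has_real_derivative pdC C j (vec_upd x j w)) (at w)"
      if "p < w" "w < q" for w
      unfolding f_def using pq that by (intro has_real_derivative_coord[OF x]) auto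
    ultimately obtain l w where "p < w" "w < q" "(f has_real_derivative l) (at w)"
      "f q - f p = (q - p) * l"
      using MVT[OF pq(2)] real_differentiable_def by meson
    then show ?thesis
      using deriv DERIV_unique by blast
  qed
  consider "y = z" | "y < z" | "z < y" by linarith
  then show ?thesis
  proof cases
    case 2
    then obtain \<xi> where "y < \<xi>" "\<xi> < z" "f z - f y = (z - y) * pdC C j (vec_upd x j \<xi>)"
      using mvt[of y z] y z by auto
    then show ?thesis unfolding f_def by (intro exI[of _ \<xi>]) auto
  next
    case 3
    then obtain \<xi> where "z < \<xi>" "\<xi> < y" "f y - f z = (y - z) * pdC C j (vec_upd x j \<xi>)"
      using mvt[of z y] y z by auto
    then show ?thesis unfolding f_def by (intro exI[of _ \<xi>]) (auto simp: algebra_simps)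
  qed auto
qed

lemma pdC_uniformly_continuous_inner:
  assumes eta: "0 < eta" and eps: "0 < eps"
  obtains d where "0 < d"
    "\<And>j x y. x \<in> unit_cube \<Longrightarrow> y \<in> unit_cube \<Longrightarrow> x$j \<in> {eta..1-eta} \<Longrightarrow> y$j \<in> {eta..1-eta} \<Longrightarrow>
       dist x y < d \<Longrightarrow> \<bar>pdC C j x - pdC C j y\<bar> < eps"
proof -
  define K where "K j = unit_cube \<inter> {x. eta \<le> x$j} \<inter> {x. x$j \<le> 1 - eta}" for j :: 'd
  have "uniformly_continuous_on (K j) (pdC C j)" for j
  proof (rule compact_uniformly_continuous)
    show "compact (K j)"
      unfolding K_def unit_cube_eq_cbox
      by (intro compact_Int_closed closed_Collect_le continuous_intros) simp
    have "K j \<subseteq> {u \<in> unit_cube. 0 < u$j \<and> u$j < 1}"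
      using eta by (auto simp: K_def)
    then show "continuous_on (K j) (pdC C j)"
      by (rule continuous_on_subset[OF partial_continuous])
  qed
  then have "\<forall>j. \<exists>d>0. \<forall>x\<in>K j. \<forall>y\<in>K j. dist x y < d \<longrightarrow> \<bar>pdC C j x - pdC C j y\<bar> < eps"
    using eps unfolding uniformly_continuous_on_def dist_real_def by (metis dist_commute)
  then obtain dj where dj: "\<And>j. 0 < dj j"
    "\<And>j x y. x \<in> K j \<Longrightarrow> y \<in> K j \<Longrightarrow> dist x y < dj j \<Longrightarrow> \<bar>pdC C j x - pdC C j y\<bar> < eps"
    by metis
  show ?thesis
  proof (rule that[of "Min (range dj)"])
    show "0 < Min (range dj)" using dj(1) by simp
    fix j :: 'd and x y assume "x \<in> unit_cube" "y \<in> unit_cube" "x$j \<in> {eta..1-eta}" "y$j \<in> {eta..1-eta}"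
      "dist x y < Min (range dj)"
    moreover have "Min (range dj) \<le> dj j" by simp
    ultimately show "\<bar>pdC C j x - pdC C j y\<bar> < eps"
      by (intro dj(2)) (auto simp: K_def)
  qed
qed

lemma increment_expansion_inner:
  assumes x: "x \<in> unit_cube" and u: "u \<in> unit_cube" and v: "v \<in> unit_cube"
    and between: "\<forall>i. x$i = u$i \<or> x$i = v$i" and eta: "0 < eta" and inner: "u$j \<in> {eta..1-eta}"
    and close: "(\<Sum>i\<in>UNIV. \<bar>v$i - u$i\<bar>) < min (eta/2) d"
    and modulus: "\<And>x y. x \<in> unit_cube \<Longrightarrow> y \<in> unit_cube \<Longrightarrow> x$j \<in> {eta/2..1-eta/2} \<Longrightarrow>
       y$j \<in> {eta/2..1-eta/2} \<Longrightarrow> dist x y < d \<Longrightarrow> \<bar>pdC C j x - pdC C j y\<bar> < eps"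
  shows "\<bar>C (vec_upd x j (v$j)) - C (vec_upd x j (u$j)) - pdC C j u * (v$j - u$j)\<bar> \<le> eps * \<bar>v$j - u$j\<bar>"
proof -
  have uj: "u$j \<in> {0..1}" and vj: "v$j \<in> {0..1}"
    using u v by (auto simp: unit_cube_def)
  obtain \<xi> where \<xi>: "\<bar>\<xi> - u$j\<bar> \<le> \<bar>v$j - u$j\<bar>"
    "C (vec_upd x j (v$j)) - C (vec_upd x j (u$j)) = pdC C j (vec_upd x j \<xi>) * (v$j - u$j)"
    using mean_value_coord[OF x uj vj] by blast
  have "\<bar>v$j - u$j\<bar> \<le> (\<Sum>i\<in>UNIV. \<bar>v$i - u$i\<bar>)"
    by (rule member_le_sum) auto
  then have \<xi>_inner: "\<xi> \<in> {eta/2..1-eta/2}"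
    using \<xi>(1) close inner by auto
  have "dist (vec_upd x j \<xi>) u \<le> (\<Sum>i\<in>UNIV. \<bar>vec_upd x j \<xi> $ i - u$i\<bar>)"
    by (rule dist_le_sum_abs_cart)
  also have "\<dots> \<le> (\<Sum>i\<in>UNIV. \<bar>v$i - u$i\<bar>)"
  proof (rule sum_mono)
    fix i show "\<bar>vec_upd x j \<xi> $ i - u$i\<bar> \<le> \<bar>v$i - u$i\<bar>"
      using between[rule_format, of i] \<xi>(1) by auto
  qed
  finally have "dist (vec_upd x j \<xi>) u < d"
    using close by linarith
  then have "\<bar>pdC C j (vec_upd x j \<xi>) - pdC C j u\<bar> < eps"
    using \<xi>_inner inner eta by (intro modulus vec_upd_in_unit_cube[OF x] u) auto
  then show ?thesis
    unfolding \<xi>(2) by (simp add: left_diff_distrib[symmetric] abs_mult mult_right_mono)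
qed

lemma increment_expansion_lipschitz:
  assumes x: "x \<in> unit_cube" and u: "u \<in> unit_cube" and v: "v \<in> unit_cube"
  shows "\<bar>C (vec_upd x j (v$j)) - C (vec_upd x j (u$j)) - pdC C j u * (v$j - u$j)\<bar> \<le> 2 * \<bar>v$j - u$j\<bar>"
proof -
  have "\<bar>C (vec_upd x j (v$j)) - C (vec_upd x j (u$j))\<bar> \<le> \<bar>v$j - u$j\<bar>"
    using u v by (intro copula_lipschitz_coord[OF copula x]) (auto simp: unit_cube_def)
  moreover have "\<bar>pdC C j u * (v$j - u$j)\<bar> \<le> \<bar>v$j - u$j\<bar>"
    using abs_pdC_le_1[OF u, of j] by (simp add: abs_mult mult_left_le_one_le)
  ultimately show ?thesis
    by (simp add: abs_le_iff)
qed

lemma first_order_expansion: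
  assumes eta: "0 < eta" and eps: "0 < eps"
  obtains \<delta> where "0 < \<delta>"
    "\<And>u v. u \<in> unit_cube \<Longrightarrow> v \<in> unit_cube \<Longrightarrow> (\<Sum>i\<in>UNIV. \<bar>v$i - u$i\<bar>) < \<delta> \<Longrightarrow>
       \<bar>C v - C u - (\<Sum>j\<in>UNIV. pdC C j u * (v$j - u$j))\<bar>
         \<le> (\<Sum>j\<in>UNIV. (if u$j \<in> {eta..1-eta} then eps else 2) * \<bar>v$j - u$j\<bar>)"
proof -
  obtain d where d: "0 < d"
    "\<And>j x y. x \<in> unit_cube \<Longrightarrow> y \<in> unit_cube \<Longrightarrow> x$j \<in> {eta/2..1-eta/2} \<Longrightarrow>
       y$j \<in> {eta/2..1-eta/2} \<Longrightarrow> dist x y < d \<Longrightarrow> \<bar>pdC C j x - pdC C j y\<bar> < eps"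
    using pdC_uniformly_continuous_inner[of "eta/2" eps] eta eps by auto
  show ?thesis
  proof (rule that[of "min (eta/2) d"])
    show "0 < min (eta/2) d" using eta d(1) by simp
    fix u v :: "real^'d" assume u: "u \<in> unit_cube" and v: "v \<in> unit_cube"
      and close: "(\<Sum>i\<in>UNIV. \<bar>v$i - u$i\<bar>) < min (eta/2) d"
    show "\<bar>C v - C u - (\<Sum>j\<in>UNIV. pdC C j u * (v$j - u$j))\<bar>
         \<le> (\<Sum>j\<in>UNIV. (if u$j \<in> {eta..1-eta} then eps else 2) * \<bar>v$j - u$j\<bar>)"
    proof (rule sum_coordinate_increments_bound[OF u v])
      fix j :: 'd and x :: "real^'d" assume x: "x \<in> unit_cube" and between: "\<forall>i. x$i = u$i \<or> x$i = v$i"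
      show "\<bar>C (vec_upd x j (v$j)) - C (vec_upd x j (u$j)) - pdC C j u * (v$j - u$j)\<bar>
          \<le> (if u$j \<in> {eta..1-eta} then eps else 2) * \<bar>v$j - u$j\<bar>"
      proof (cases "u$j \<in> {eta..1-eta}")
        case True
        then show ?thesis
          using increment_expansion_inner[OF x u v between eta True close d(2)] by simp
      next
        case False
        show ?thesis
          unfolding if_not_P[OF False] by (rule increment_expansion_lipschitz[OF x u v])
      qed
    qed
  qed
qed

lemma abs_linearization_le:
  assumes u: "u \<in> unit_cube" and bound: "\<And>x. x \<in> unit_cube \<Longrightarrow> \<bar>\<alpha> x\<bar> \<le> K"
  shows "\<bar>\<alpha> u - (\<Sum>j\<in>UNIV. pdC C j u * \<alpha> (vec1 j (u$j)))\<bar> \<le> (real CARD('d) + 1) * K"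
proof -
  have "\<bar>\<Sum>j\<in>UNIV. pdC C j u * \<alpha> (vec1 j (u$j))\<bar> \<le> real CARD('d) * K"
  proof (intro abs_sum_le_card_mult)
    fix j
    show "\<bar>pdC C j u * \<alpha> (vec1 j (u$j))\<bar> \<le> K"
      using abs_pdC_le_1[OF u, of j] bound[OF vec1_in_unit_cube, of "u$j" j] u
        mult_mono[of "\<bar>pdC C j u\<bar>" 1 "\<bar>\<alpha> (vec1 j (u$j))\<bar>" K]
      by (simp add: abs_mult unit_cube_def)
  qed
  then show ?thesis
    using bound[OF u] by (simp add: algebra_simps abs_le_iff)
qed

end

section \<open>Generalised inverses of perturbed margins\<close>

text \<open>I_n of a margin v \<mapsto> \<lambda>_n v + G v / r is this inverse with c = r \<lambda>_n
  (In_perturbed_margin).\<close>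
definition perturbed_inverse :: "real \<Rightarrow> (real \<Rightarrow> real) \<Rightarrow> real \<Rightarrow> real" where
  "perturbed_inverse c G u = Inf {v \<in> {0..1}. c * u \<le> c * v + G v}"

lemma perturbed_inverse_zero:
  assumes "0 < c" "u \<in> {0..1}"
  shows "perturbed_inverse c (\<lambda>_. 0) u = u"
proof -
  have "{v \<in> {0..1}. c * u \<le> c * v + 0} = {u..1}"
    using assms by auto
  then show ?thesis
    using assms by (simp add: perturbed_inverse_def)
qed

context
  fixes c u :: real and G :: "real \<Rightarrow> real"
  assumes c: "0 < c" and u: "u \<in> {0..1}" and G1: "G 1 = 0"
begin

private abbreviation (input) "S \<equiv> {v \<in> {0..1}. c * u \<le> c * v + G v}"

private lemma one_in_S: "1 \<in> S" and bdd_S: "bdd_below S"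
  using c u G1 by (auto intro: bdd_belowI[of _ 0])

lemma perturbed_inverse_in_unit: "perturbed_inverse c G u \<in> {0..1}"
proof -
  have "0 \<le> Inf S"
    using one_in_S by (intro cInf_greatest) auto
  moreover have "Inf S \<le> 1"
    using one_in_S bdd_S by (rule cInf_lower)
  ultimately show ?thesis
    by (simp add: perturbed_inverse_def)
qed

private lemma below_perturbed_inverse:
  "v \<in> {0..1} \<Longrightarrow> v < perturbed_inverse c G u \<Longrightarrow> c * v + G v < c * u"
  unfolding perturbed_inverse_def using bdd_S cInf_lower[of v S] by force

private lemma above_perturbed_inverse:
  assumes "0 < h"
  obtains v where "v \<in> {0..1}" "c * u \<le> c * v + G v"
    "perturbed_inverse c G u \<le> v" "v < perturbed_inverse c G u + h"
proof -
  have "S \<noteq> {}" "Inf S < Inf S + h"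
    using one_in_S assms by auto
  then obtain v where "v \<in> S" "v < Inf S + h"
    using cInf_less_iff[OF _ bdd_S] by blast
  then show ?thesis
    using that cInf_lower[OF _ bdd_S] unfolding perturbed_inverse_def by blast
qed

private lemma perturbed_inverse_approx_lower:
  assumes near: "\<And>v. v \<in> {0..1} \<Longrightarrow> \<bar>v - u\<bar> < \<tau> \<Longrightarrow> \<bar>G v - g0\<bar> \<le> \<kappa>"
    and q_near: "\<bar>perturbed_inverse c G u - u\<bar> < \<tau>"
  shows "- \<kappa> - g0 \<le> c * (perturbed_inverse c G u - u)"
proof (rule field_le_epsilon)
  define q where "q = perturbed_inverse c G u"
  fix e :: real assume e: "0 < e"
  define h where "h = min (e / c) (\<tau> - \<bar>q - u\<bar>)"
  have h: "0 < h" "c * h \<le> e"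
    using e c q_near by (auto simp: h_def q_def field_simps min_def)
  obtain v where v: "v \<in> {0..1}" "c * u \<le> c * v + G v" "q \<le> v" "v < q + h"
    using above_perturbed_inverse[OF h(1)] unfolding q_def by blast
  have "\<bar>v - u\<bar> < \<tau>"
    using v(3,4) by (auto simp: h_def)
  then have "\<bar>G v - g0\<bar> \<le> \<kappa>"
    using near v(1) by blast
  moreover have "c * (v - q) \<le> c * h"
    using c v(4) by simp
  ultimately show "- \<kappa> - g0 \<le> c * (q - u) + e"
    using v(2) h(2) by (simp add: algebra_simps abs_le_iff)
qed

private lemma perturbed_inverse_approx_upper:
  assumes G0: "G 0 = 0"
    and near: "\<And>v. v \<in> {0..1} \<Longrightarrow> \<bar>v - u\<bar> < \<tau> \<Longrightarrow> \<bar>G v - g0\<bar> \<le> \<kappa>"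
    and q_near: "\<bar>perturbed_inverse c G u - u\<bar> < \<tau>"
  shows "c * (perturbed_inverse c G u - u) \<le> \<kappa> - g0"
proof -
  define q where "q = perturbed_inverse c G u"
  have q: "q \<in> {0..1}" unfolding q_def by (rule perturbed_inverse_in_unit)
  show ?thesis
  proof (cases "q = 0")
    case True
    then have "\<bar>G 0 - g0\<bar> \<le> \<kappa>"
      using near q_near by (simp add: q_def)
    moreover have "0 \<le> c * u"
      using c u by simp
    ultimately show ?thesis
      using True G0 by (simp add: q_def abs_le_iff)
  next
    case False
    show ?thesis
    proof (rule field_le_epsilon)
      fix e :: real assume e: "0 < e"
      define m where "m = min q (min (e / c) (\<tau> - \<bar>q - u\<bar>))"
      have m: "0 < m" "m \<le> q" "m \<le> e / c" "m \<le> \<tau> - \<bar>q - u\<bar>"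
        using e c q_near False q by (auto simp: m_def q_def)
      then have "c * m \<le> e"
        using c by (simp add: pos_le_divide_eq mult.commute)
      define h where "h = m / 2"
      have h: "0 < h" "h < q" "c * h \<le> e" "h < \<tau> - \<bar>q - u\<bar>"
        using m c e \<open>c * m \<le> e\<close> unfolding h_def by auto
      have "q - h \<in> {0..1}" "\<bar>q - h - u\<bar> < \<tau>"
        using h q by auto
      then have "c * (q - h) + G (q - h) < c * u" "\<bar>G (q - h) - g0\<bar> \<le> \<kappa>"
        using below_perturbed_inverse[of "q - h"] near h(1) unfolding q_def by auto
      then show "c * (perturbed_inverse c G u - u) \<le> \<kappa> - g0 + e"
        using h(3) by (simp add: q_def algebra_simps abs_le_iff)
    qed
  qed
qed

lemma perturbed_inverse_approx:
  assumes G0: "G 0 = 0"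
    and near: "\<And>v. v \<in> {0..1} \<Longrightarrow> \<bar>v - u\<bar> < \<tau> \<Longrightarrow> \<bar>G v - g0\<bar> \<le> \<kappa>"
    and q_near: "\<bar>perturbed_inverse c G u - u\<bar> < \<tau>"
  shows "\<bar>c * (perturbed_inverse c G u - u) + g0\<bar> \<le> \<kappa>"
  using perturbed_inverse_approx_lower[OF near q_near] perturbed_inverse_approx_upper[OF G0 near q_near]
  by (simp add: abs_le_iff)

lemma perturbed_inverse_bound:
  assumes G0: "G 0 = 0" and bound: "\<And>v. v \<in> {0..1} \<Longrightarrow> \<bar>G v\<bar> \<le> K"
  shows "\<bar>c * (perturbed_inverse c G u - u)\<bar> \<le> K"
  using perturbed_inverse_approx[OF G0, of 2 0 K] bound perturbed_inverse_in_unit u by force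

end

section \<open>The perturbed sequential empirical copula process\<close>

definition marginal_inverse :: "real \<Rightarrow> (real^'d \<Rightarrow> real) \<Rightarrow> real^'d \<Rightarrow> real^'d" where
  "marginal_inverse c \<beta> u = (\<chi> j. perturbed_inverse c (\<lambda>x. \<beta> (vec1 j x)) (u$j))"

lemma lam_pos:
  assumes "1 \<le> n" "\<lfloor>real n * s\<rfloor> < \<lfloor>real n * t\<rfloor>"
  shows "0 < lam n s t"
  using assms by (simp add: lam_def)

lemma lam_ge:
  assumes "1 \<le> n"
  shows "t - s - 1 / real n \<le> lam n s t"
proof -
  have "real n * t - 1 - real n * s \<le> real_of_int \<lfloor>real n * t\<rfloor> - real_of_int \<lfloor>real n * s\<rfloor>"
    by linarith
  then have "(real n * t - 1 - real n * s) / real n \<le> lam n s t"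
    unfolding lam_def using assms by (simp add: divide_right_mono)
  then show ?thesis
    using assms by (simp add: diff_divide_distrib)
qed

lemma lam_degenerate:
  assumes "1 \<le> n" "\<lfloor>real n * s\<rfloor> = \<lfloor>real n * t\<rfloor>"
  shows "lam n s t = 0" "t - s < 1 / real n"
proof -
  show "lam n s t = 0" using assms by (simp add: lam_def)
  have "real n * t - real n * s < 1"
    using assms(2) by linarith
  then show "t - s < 1 / real n"
    using assms(1) by (simp add: field_simps)
qed

lemma In_perturbed_margin:
  assumes lam: "0 < lam n s t" and r: "0 < r"
    and margin: "\<And>v. v \<in> {0..1} \<Longrightarrow> marg H j s t v = lam n s t * v + G v / r"
  shows "In n (marg H j) s t x = perturbed_inverse (r * lam n s t) G x"
proof -
  have "lam n s t * x \<le> marg H j s t v \<longleftrightarrow> r * (lam n s t * x) \<le> r * marg H j s t v" for v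
    using r by simp
  moreover have "r * marg H j s t v = r * lam n s t * v + G v" if "v \<in> {0..1}" for v
    using margin[OF that] r by (simp add: field_simps)
  ultimately have "lam n s t * x \<le> marg H j s t v \<longleftrightarrow> r * lam n s t * x \<le> r * lam n s t * v + G v"
    if "v \<in> {0..1}" for v
    using that by (simp add: mult.assoc)
  then show ?thesis
    unfolding In_def perturbed_inverse_def by (metis (no_types, lifting) mem_Collect_eq)
qed

lemma gn_eq_marginal_inverse:
  fixes C :: "real^'d \<Rightarrow> real"
  assumes cop: "is_copula C" and n: "1 \<le> n" and floor: "\<lfloor>real n * s\<rfloor> < \<lfloor>real n * t\<rfloor>"
    and u: "u \<in> unit_cube"
  defines "c \<equiv> sqrt (real n) * lam n s t"
  shows "gn n C b s t u = c * (C (marginal_inverse c (b s t) u) - C u) + b s t (marginal_inverse c (b s t) u)"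
proof -
  define r where "r = sqrt (real n)"
  define H where "H = (\<lambda>s t u. Cstar n C s t u + b s t u / r)"
  have lam: "0 < lam n s t" and r: "0 < r"
    using lam_pos[OF n floor] n by (auto simp: r_def)
  have margins: "C (vec1 j v) = v" if "v \<in> {0..1}" for j v
    using cop that by (simp add: is_copula_def)
  have uj: "u$j \<in> {0..1}" for j
    using u by (simp add: unit_cube_def)
  have "In n (marg H j) s t (u$j) = perturbed_inverse c (\<lambda>x. b s t (vec1 j x)) (u$j)" for j
    unfolding c_def r_def[symmetric]
    by (rule In_perturbed_margin[OF lam r]) (simp add: marg_def H_def Cstar_def margins)
  then have PhiH: "Phi n H s t u = lam n s t * C (marginal_inverse c (b s t) u)
      + b s t (marginal_inverse c (b s t) u) / r"
    by (simp add: Phi_def H_def Cstar_def marginal_inverse_def)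
  moreover have "In n (marg (Cstar n C) j) s t (u$j) = u$j" for j
    using In_perturbed_margin[OF lam r, of "Cstar n C" j "\<lambda>_. 0"] perturbed_inverse_zero[OF _ uj]
      lam r by (simp add: marg_def Cstar_def margins)
  then have PhiC: "Phi n (Cstar n C) s t u = lam n s t * C u"
    by (simp add: Phi_def Cstar_def vec_lambda_eta)
  have "gn n C b s t u = r * (Phi n H s t u - Phi n (Cstar n C) s t u)"
    by (simp only: gn_def H_def r_def)
  then show ?thesis
    using r unfolding PhiH PhiC c_def r_def[symmetric] by (simp add: algebra_simps)
qed

definition vanishes_on_boundary :: "(real^'d \<Rightarrow> real) \<Rightarrow> bool" where
  "vanishes_on_boundary \<beta> \<longleftrightarrow> (\<forall>x\<in>unit_cube. (\<exists>j. x$j = 0) \<or> x = (\<chi> j. 1) \<longrightarrow> \<beta> x = 0)"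

lemma vanishes_on_boundary_vec1:
  assumes "vanishes_on_boundary \<beta>"
  shows "\<beta> (vec1 j 0) = 0" "\<beta> (vec1 j 1) = 0"
  using assms vec1_in_unit_cube[of 0 j] vec1_in_unit_cube[of 1 j]
  by (auto simp: vanishes_on_boundary_def vec1_one) (auto simp: vec1_def)

lemma Dstar_vanishes_on_boundary:
  "Dstar a \<Longrightarrow> (s, t) \<in> Delta \<Longrightarrow> s < t \<Longrightarrow> vanishes_on_boundary (a s t)"
  unfolding Dstar_def vanishes_on_boundary_def by fast

lemma Dstar_diagonal: "Dstar a \<Longrightarrow> (s, s) \<in> Delta \<Longrightarrow> x \<in> unit_cube \<Longrightarrow> a s s x = 0"
  unfolding Dstar_def by fast

lemma vanishes_on_boundary_near_face:
  assumes bdry: "vanishes_on_boundary \<alpha>"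
    and modulus: "\<And>x y. x \<in> unit_cube \<Longrightarrow> y \<in> unit_cube \<Longrightarrow> dist x y < \<rho> \<Longrightarrow> \<bar>\<alpha> x - \<alpha> y\<bar> < eps"
    and x: "x \<in> {0..1}" and off: "x \<notin> {eta..1-eta}" and eta: "eta \<le> \<rho>"
  shows "\<bar>\<alpha> (vec1 j x)\<bar> < eps"
proof -
  have near: "\<bar>\<alpha> (vec1 j x) - \<alpha> (vec1 j e)\<bar> < eps" if "e \<in> {0..1}" "\<bar>x - e\<bar> < eta" for e
  proof -
    have "dist (vec1 j x) (vec1 j e) < \<rho>"
      using dist_vec1[of j x e] that(2) eta by linarith
    then show ?thesis
      by (intro modulus vec1_in_unit_cube x that(1))
  qed
  consider "x < eta" | "1 - eta < x" using off by auto
  then show ?thesis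
  proof cases
    case 1
    then show ?thesis
      using near[of 0] x vanishes_on_boundary_vec1(1)[OF bdry] by simp
  next
    case 2
    then show ?thesis
      using near[of 1] x vanishes_on_boundary_vec1(2)[OF bdry] by simp
  qed
qed

lemma gn_degenerate:
  fixes C :: "real^'d \<Rightarrow> real"
  assumes n: "1 \<le> n" and Dn: "Dstar_n n C b" and st: "(s, t) \<in> Delta"
    and floor: "\<lfloor>real n * s\<rfloor> = \<lfloor>real n * t\<rfloor>"
  shows "gn n C b s t u = 0"
proof -
  define H where "H = (\<lambda>s t u. Cstar n C s t u + b s t u / sqrt (real n))"
  have lam: "lam n s t = 0"
    using lam_degenerate[OF n floor] by simp
  have "\<forall>v\<in>{0..1}. marg H j s t v = 0" for j
  proof -
    have "isEstar n (marg H j)"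
      using Dn by (simp add: Dstar_n_def isEstar_d_def H_def)
    then have "if \<lfloor>real n * s\<rfloor> < \<lfloor>real n * t\<rfloor> then isE (\<lambda>u. marg H j s t u / lam n s t)
        else \<forall>u\<in>{0..1}. marg H j s t u = 0"
      using st unfolding isEstar_def by fast
    then show ?thesis
      using floor by simp
  qed
  then have "marg H j s t v = 0" if "v \<in> {0..1}" for j v
    using that by blast
  then have "{v \<in> {0..1}. lam n s t * u$j \<le> marg H j s t v} = {0..1}" for j
    using lam by auto
  then have "In n (marg H j) s t (u$j) = 0" for j
    by (simp add: In_def)
  moreover have "b s t 0 = 0"
  proof (cases "s = t")
    case True
    then show ?thesis
      using Dn st Dstar_diagonal[of b s 0] by (simp add: Dstar_n_def unit_cube_def)
  next
    case False
    then have "vanishes_on_boundary (b s t)"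
      using Dn st by (intro Dstar_vanishes_on_boundary) (auto simp: Dstar_n_def Delta_def)
    then show ?thesis
      by (simp add: vanishes_on_boundary_def unit_cube_def)
  qed
  ultimately have "Phi n H s t u = 0"
    using lam by (simp add: Phi_def H_def Cstar_def zero_vec_def)
  moreover have "Phi n (Cstar n C) s t u = 0"
    using lam by (simp add: Phi_def Cstar_def)
  ultimately show ?thesis
    by (simp add: gn_def H_def)
qed

lemma glim_eq: "glim C a s t u = a s t u - (\<Sum>j\<in>UNIV. pdC C j u * a s t (vec1 j (u$j)))"
proof -
  have "(\<chi> i. if i = j then u$i else 1) = vec1 j (u$j)" for j
    by (simp add: vec1_def vec_eq_iff)
  then show ?thesis by (simp add: glim_def)
qed

lemma Dstar0_modulus:
  fixes a :: "real \<Rightarrow> real \<Rightarrow> real^'d \<Rightarrow> real"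
  assumes a0: "Dstar0 a" and eps: "0 < eps"
  obtains \<rho> where "0 < \<rho>"
    "\<And>s t x y. (s, t) \<in> Delta \<Longrightarrow> x \<in> unit_cube \<Longrightarrow> y \<in> unit_cube \<Longrightarrow> dist x y < \<rho> \<Longrightarrow>
       \<bar>a s t x - a s t y\<bar> < eps"
    "\<And>s t x. (s, t) \<in> Delta \<Longrightarrow> t - s < \<rho> \<Longrightarrow> x \<in> unit_cube \<Longrightarrow> \<bar>a s t x\<bar> < eps"
proof -
  define f where "f = (\<lambda>((s,t),u). a s t u :: real)"
  have "compact (Delta \<times> (unit_cube :: (real^'d) set))"
    by (intro compact_Times compact_Delta) (simp add: unit_cube_eq_cbox)
  moreover have "{((s,t),u). (s,t) \<in> Delta \<and> u \<in> unit_cube} = Delta \<times> (unit_cube :: (real^'d) set)"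
    by auto
  ultimately have "uniformly_continuous_on (Delta \<times> unit_cube) f"
    using a0 unfolding Dstar0_def f_def by (metis compact_uniformly_continuous)
  then obtain \<rho> where \<rho>: "0 < \<rho>"
    and "\<forall>p\<in>Delta \<times> unit_cube. \<forall>q\<in>Delta \<times> unit_cube. dist q p < \<rho> \<longrightarrow> dist (f q) (f p) < eps"
    using eps unfolding uniformly_continuous_on_def by blast
  then have modulus: "\<bar>f p - f q\<bar> < eps"
    if "p \<in> Delta \<times> unit_cube" "q \<in> Delta \<times> unit_cube" "dist p q < \<rho>" for p q
    using that by (metis dist_commute dist_real_def)
  show ?thesis
  proof (rule that[OF \<rho>])
    fix s t and x y :: "real^'d" assume "(s, t) \<in> Delta" "x \<in> unit_cube" "y \<in> unit_cube" "dist x y < \<rho>"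
    then show "\<bar>a s t x - a s t y\<bar> < eps"
      using modulus[of "((s,t),x)" "((s,t),y)"] by (simp add: dist_Pair_Pair f_def)
  next
    fix s t and x :: "real^'d" assume st: "(s, t) \<in> Delta" and close: "t - s < \<rho>" and x: "x \<in> unit_cube"
    have ss: "(s, s) \<in> Delta" using st by (auto simp: Delta_def)
    have "dist ((s,t),x) ((s,s),x) < \<rho>"
      using close st by (simp add: dist_Pair_Pair dist_real_def Delta_def)
    then have "\<bar>a s t x - a s s x\<bar> < eps"
      using modulus[of "((s,t),x)" "((s,s),x)"] st ss x by (simp add: f_def)
    moreover have "a s s x = 0"
      using Dstar_diagonal[OF _ ss x] a0 by (simp add: Dstar0_def)
    ultimately show "\<bar>a s t x\<bar> < eps"
      by simp
  qed
qed

section \<open>Rescaled increments of a smooth copula\<close>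

lemma marginal_inverse_in_unit_cube:
  assumes "0 < c" "u \<in> unit_cube" "vanishes_on_boundary \<beta>"
  shows "marginal_inverse c \<beta> u \<in> unit_cube"
proof -
  have "perturbed_inverse c (\<lambda>x. \<beta> (vec1 j x)) (u$j) \<in> {0..1}" for j
    using assms vanishes_on_boundary_vec1(2)[of \<beta> j]
    by (intro perturbed_inverse_in_unit) (auto simp: unit_cube_def)
  then show ?thesis
    by (simp add: marginal_inverse_def unit_cube_def)
qed

lemma marginal_inverse_bound:
  assumes c: "0 < c" and u: "u \<in> unit_cube" and bdry: "vanishes_on_boundary \<beta>"
    and bound: "\<And>x. x \<in> unit_cube \<Longrightarrow> \<bar>\<beta> x\<bar> \<le> K"
  shows "\<bar>c * (marginal_inverse c \<beta> u $ j - u$j)\<bar> \<le> K"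
proof -
  have "\<bar>c * (perturbed_inverse c (\<lambda>x. \<beta> (vec1 j x)) (u$j) - u$j)\<bar> \<le> K"
    using u
    by (intro perturbed_inverse_bound[OF c _ vanishes_on_boundary_vec1(2)[OF bdry]
        vanishes_on_boundary_vec1(1)[OF bdry]] bound vec1_in_unit_cube) (auto simp: unit_cube_def)
  then show ?thesis
    by (simp add: marginal_inverse_def)
qed

lemma marginal_inverse_shift:
  assumes c: "0 < c" and u: "u \<in> unit_cube"
    and \<alpha>_bound: "\<And>x. x \<in> unit_cube \<Longrightarrow> \<bar>\<alpha> x\<bar> \<le> A"
    and \<beta>\<alpha>: "\<And>x. x \<in> unit_cube \<Longrightarrow> \<bar>\<beta> x - \<alpha> x\<bar> < eps" and eps: "eps \<le> 1"
    and \<alpha>_cont: "\<And>x y. x \<in> unit_cube \<Longrightarrow> y \<in> unit_cube \<Longrightarrow> dist x y < \<rho> \<Longrightarrow> \<bar>\<alpha> x - \<alpha> y\<bar> < eps"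
    and bdry: "vanishes_on_boundary \<beta>"
    and scale: "A + 1 \<le> c * \<tau>" and \<tau>: "\<tau> < \<rho>"
  defines "v \<equiv> marginal_inverse c \<beta> u"
  shows "\<bar>c * (v$j - u$j)\<bar> \<le> A + 1" and "\<bar>v$j - u$j\<bar> \<le> \<tau>"
    and "\<bar>c * (v$j - u$j) + \<alpha> (vec1 j (u$j))\<bar> \<le> 2 * eps"
proof -
  have uj: "u$j \<in> {0..1}" using u by (simp add: unit_cube_def)
  have "\<bar>\<beta> x\<bar> \<le> A + 1" if "x \<in> unit_cube" for x
    using \<alpha>_bound[OF that] \<beta>\<alpha>[OF that] eps by linarith
  then show bound: "\<bar>c * (v$j - u$j)\<bar> \<le> A + 1"
    unfolding v_def by (rule marginal_inverse_bound[OF c u bdry])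
  have "\<bar>c * (v$j - u$j)\<bar> = c * \<bar>v$j - u$j\<bar>"
    using c by (simp add: abs_mult)
  then have "c * \<bar>v$j - u$j\<bar> \<le> c * \<tau>"
    using bound scale by linarith
  then show close: "\<bar>v$j - u$j\<bar> \<le> \<tau>"
    by (rule mult_left_le_imp_le) (use c in simp)
  have "\<bar>\<beta> (vec1 j x) - \<alpha> (vec1 j (u$j))\<bar> \<le> 2 * eps"
    if "x \<in> {0..1}" "\<bar>x - u$j\<bar> < \<rho>" for x
  proof -
    have "dist (vec1 j x) (vec1 j (u$j)) < \<rho>"
      using dist_vec1[of j x "u$j"] that(2) by linarith
    then have "\<bar>\<alpha> (vec1 j x) - \<alpha> (vec1 j (u$j))\<bar> < eps"
      by (intro \<alpha>_cont vec1_in_unit_cube that(1) uj)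
    then show ?thesis
      using \<beta>\<alpha>[OF vec1_in_unit_cube[OF that(1), of j]] by linarith
  qed
  moreover have "\<bar>v$j - u$j\<bar> < \<rho>"
    using close \<tau> by linarith
  ultimately show "\<bar>c * (v$j - u$j) + \<alpha> (vec1 j (u$j))\<bar> \<le> 2 * eps"
    unfolding v_def marginal_inverse_def vec_lambda_beta
    by (intro perturbed_inverse_approx[OF c uj] vanishes_on_boundary_vec1[OF bdry]) auto
qed

lemma rescaled_remainder_bound:
  fixes C :: "real^'d \<Rightarrow> real"
  assumes c: "0 < c" and eps: "0 \<le> eps"
    and expansion: "\<bar>C v - C u - (\<Sum>j\<in>UNIV. P j * (v$j - u$j))\<bar>
      \<le> (\<Sum>j\<in>UNIV. (if j \<in> I then eps else 2) * \<bar>v$j - u$j\<bar>)"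
    and moved: "\<And>j. \<bar>c * (v$j - u$j)\<bar> \<le> B"
    and moved_off: "\<And>j. j \<notin> I \<Longrightarrow> \<bar>c * (v$j - u$j)\<bar> \<le> 3 * eps"
  shows "\<bar>c * (C v - C u - (\<Sum>j\<in>UNIV. P j * (v$j - u$j)))\<bar> \<le> real CARD('d) * ((B + 6) * eps)"
proof -
  have "0 \<le> B"
    using moved by (meson abs_ge_zero order_trans)
  then have B: "0 \<le> B * eps"
    using eps by simp
  have weighted: "c * ((if j \<in> I then eps else 2) * \<bar>v$j - u$j\<bar>) \<le> (B + 6) * eps" for j
  proof (cases "j \<in> I")
    case True
    have "c * (eps * \<bar>v$j - u$j\<bar>) = eps * \<bar>c * (v$j - u$j)\<bar>"
      using c by (simp add: abs_mult)
    also have "\<dots> \<le> eps * B"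
      using moved[of j] eps by (rule mult_left_mono)
    finally show ?thesis
      using True eps by (simp add: algebra_simps)
  next
    case False
    have "c * ((if j \<in> I then eps else 2) * \<bar>v$j - u$j\<bar>) = 2 * \<bar>c * (v$j - u$j)\<bar>"
      using False c by (simp add: abs_mult)
    also have "\<dots> \<le> (B + 6) * eps"
      using moved_off[OF False] B by (simp add: algebra_simps)
    finally show ?thesis .
  qed
  have "\<bar>c * (C v - C u - (\<Sum>j\<in>UNIV. P j * (v$j - u$j)))\<bar>
      \<le> (\<Sum>j\<in>UNIV. c * ((if j \<in> I then eps else 2) * \<bar>v$j - u$j\<bar>))"
    unfolding abs_mult abs_of_pos[OF c] sum_distrib_left[symmetric]
    by (rule mult_left_mono[OF expansion]) (use c in simp)
  also have "\<dots> \<le> real CARD('d) * ((B + 6) * eps)"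
    using sum_bounded_above[of UNIV "\<lambda>j. c * ((if j \<in> I then eps else 2) * \<bar>v$j - u$j\<bar>)"]
      weighted by simp
  finally show ?thesis .
qed

lemma rescaled_increment_split:
  fixes P g :: "'d::finite \<Rightarrow> real"
  shows "c * (C v - C u) + \<beta> v - (\<alpha> u - (\<Sum>j\<in>UNIV. P j * g j))
      = c * (C v - C u - (\<Sum>j\<in>UNIV. P j * (v$j - u$j)))
        + (\<Sum>j\<in>UNIV. P j * (c * (v$j - u$j) + g j)) + (\<beta> v - \<alpha> v) + (\<alpha> v - \<alpha> u)"
proof -
  have "(\<Sum>j\<in>UNIV. P j * (c * (v$j - u$j) + g j))
      = c * (\<Sum>j\<in>UNIV. P j * (v$j - u$j)) + (\<Sum>j\<in>UNIV. P j * g j)"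
    by (simp add: distrib_left sum.distrib sum_distrib_left mult.left_commute)
  then show ?thesis
    by (simp add: right_diff_distrib)
qed

context smooth_copula
begin

lemma rescaled_increment_small:
  assumes u: "u \<in> unit_cube" and c: "0 < c"
    and \<alpha>: "\<And>x. x \<in> unit_cube \<Longrightarrow> \<bar>\<alpha> x\<bar> < eps"
    and \<beta>\<alpha>: "\<And>x. x \<in> unit_cube \<Longrightarrow> \<bar>\<beta> x - \<alpha> x\<bar> < eps"
    and bdry: "vanishes_on_boundary \<beta>"
  defines "v \<equiv> marginal_inverse c \<beta> u"
  shows "\<bar>c * (C v - C u) + \<beta> v - (\<alpha> u - (\<Sum>j\<in>UNIV. pdC C j u * \<alpha> (vec1 j (u$j))))\<bar>
    \<le> 3 * (real CARD('d) + 1) * eps"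
proof -
  define D where "D = real CARD('d)"
  have v: "v \<in> unit_cube"
    unfolding v_def by (rule marginal_inverse_in_unit_cube[OF c u bdry])
  have "\<bar>\<beta> x\<bar> \<le> 2 * eps" if "x \<in> unit_cube" for x
    using \<alpha>[OF that] \<beta>\<alpha>[OF that] by linarith
  then have "\<bar>c * (v$j - u$j)\<bar> \<le> 2 * eps" for j
    unfolding v_def by (rule marginal_inverse_bound[OF c u bdry])
  then have "(\<Sum>j\<in>UNIV. \<bar>c * (v$j - u$j)\<bar>) \<le> D * (2 * eps)"
    using sum_bounded_above[of UNIV "\<lambda>j. \<bar>c * (v$j - u$j)\<bar>"] by (simp add: D_def)
  moreover have "\<bar>c * (C v - C u)\<bar> \<le> (\<Sum>j\<in>UNIV. \<bar>c * (v$j - u$j)\<bar>)"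
    using copula_lipschitz[OF copula u v] c
    by (simp add: abs_mult sum_distrib_left[symmetric] mult_left_mono)
  moreover have "\<bar>\<alpha> u - (\<Sum>j\<in>UNIV. pdC C j u * \<alpha> (vec1 j (u$j)))\<bar> \<le> (D + 1) * eps"
    unfolding D_def using \<alpha> by (intro abs_linearization_le[OF u]) (simp add: less_imp_le)
  moreover have "\<bar>\<beta> v\<bar> < 2 * eps"
    using \<alpha>[OF v] \<beta>\<alpha>[OF v] by linarith
  ultimately show ?thesis
    unfolding D_def[symmetric] by (simp add: abs_le_iff algebra_simps) linarith
qed

text \<open>On an edge coordinate the expansion is only accurate up to the Lipschitz constant, but there
  the perturbation \<alpha>(u^(j)) is small (\<alpha> vanishes on the boundary), hence so is the rescaled move.\<close>
lemma rescaled_increment_approx: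
  assumes u: "u \<in> unit_cube" and c: "0 < c"
    and \<alpha>_bound: "\<And>x. x \<in> unit_cube \<Longrightarrow> \<bar>\<alpha> x\<bar> \<le> A"
    and \<beta>\<alpha>: "\<And>x. x \<in> unit_cube \<Longrightarrow> \<bar>\<beta> x - \<alpha> x\<bar> < eps" and eps: "eps \<le> 1"
    and \<alpha>_cont: "\<And>x y. x \<in> unit_cube \<Longrightarrow> y \<in> unit_cube \<Longrightarrow> dist x y < \<rho> \<Longrightarrow> \<bar>\<alpha> x - \<alpha> y\<bar> < eps"
    and \<alpha>_bdry: "vanishes_on_boundary \<alpha>" and \<beta>_bdry: "vanishes_on_boundary \<beta>"
    and eta: "eta \<le> \<rho>"
    and expansion: "\<And>v. v \<in> unit_cube \<Longrightarrow> (\<Sum>i\<in>UNIV. \<bar>v$i - u$i\<bar>) < \<delta> \<Longrightarrow>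
       \<bar>C v - C u - (\<Sum>j\<in>UNIV. pdC C j u * (v$j - u$j))\<bar>
         \<le> (\<Sum>j\<in>UNIV. (if u$j \<in> {eta..1-eta} then eps else 2) * \<bar>v$j - u$j\<bar>)"
    and \<tau>: "real CARD('d) * \<tau> < min \<rho> \<delta>" and scale: "A + 1 \<le> c * \<tau>"
  defines "v \<equiv> marginal_inverse c \<beta> u"
  shows "\<bar>c * (C v - C u) + \<beta> v - (\<alpha> u - (\<Sum>j\<in>UNIV. pdC C j u * \<alpha> (vec1 j (u$j))))\<bar>
    \<le> (real CARD('d) + 1) * (A + 9) * eps"
proof -
  define D where "D = real CARD('d)"
  define g where "g j = \<alpha> (vec1 j (u$j))" for j
  have D: "1 \<le> D"
    unfolding D_def using zero_less_card_finite[where 'a='d] by linarith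
  have A: "0 \<le> A" and eps0: "0 \<le> eps"
    using \<alpha>_bound[OF u] \<beta>\<alpha>[OF u] by linarith+
  have "0 < c * \<tau>" using scale A by linarith
  then have "0 < \<tau>" using c by (simp add: zero_less_mult_iff)
  then have "\<tau> \<le> D * \<tau>"
    using D by simp
  then have "\<tau> < \<rho>"
    using \<tau> by (simp add: D_def)
  then have moved: "\<bar>c * (v$j - u$j)\<bar> \<le> A + 1" and close: "\<bar>v$j - u$j\<bar> \<le> \<tau>"
    and shift: "\<bar>c * (v$j - u$j) + g j\<bar> \<le> 2 * eps" for j
    using marginal_inverse_shift[OF c u \<alpha>_bound \<beta>\<alpha> eps \<alpha>_cont \<beta>_bdry scale] by (simp_all add: v_def g_def)
  have v: "v \<in> unit_cube"
    unfolding v_def by (rule marginal_inverse_in_unit_cube[OF c u \<beta>_bdry])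
  have "(\<Sum>i\<in>UNIV. \<bar>v$i - u$i\<bar>) \<le> D * \<tau>"
    using sum_bounded_above[of UNIV "\<lambda>i. \<bar>v$i - u$i\<bar>" \<tau>] close by (simp add: D_def)
  then have sum_close: "(\<Sum>i\<in>UNIV. \<bar>v$i - u$i\<bar>) < min \<rho> \<delta>"
    using \<tau> by (simp add: D_def)
  then have "dist v u < \<rho>"
    using dist_le_sum_abs_cart[of v u] by linarith
  then have smooth: "\<bar>\<alpha> v - \<alpha> u\<bar> < eps"
    by (rule \<alpha>_cont[OF v u])
  have moved_off: "\<bar>c * (v$j - u$j)\<bar> \<le> 3 * eps" if "j \<notin> {j. u$j \<in> {eta..1-eta}}" for j
    using shift[of j] vanishes_on_boundary_near_face[OF \<alpha>_bdry \<alpha>_cont _ _ eta, of "u$j" j] that u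
    by (auto simp: g_def unit_cube_def)
  have T1: "\<bar>c * (C v - C u - (\<Sum>j\<in>UNIV. pdC C j u * (v$j - u$j)))\<bar> \<le> D * ((A + 1 + 6) * eps)"
    unfolding D_def
  proof (rule rescaled_remainder_bound[OF c eps0 _ moved moved_off])
    show "\<bar>C v - C u - (\<Sum>j\<in>UNIV. pdC C j u * (v$j - u$j))\<bar>
        \<le> (\<Sum>j\<in>UNIV. (if j \<in> {j. u$j \<in> {eta..1-eta}} then eps else 2) * \<bar>v$j - u$j\<bar>)"
      using expansion[OF v] sum_close by simp
  qed
  have T2: "\<bar>\<Sum>j\<in>UNIV. pdC C j u * (c * (v$j - u$j) + g j)\<bar> \<le> D * (2 * eps)"
    unfolding D_def
  proof (intro abs_sum_le_card_mult)
    fix j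
    show "\<bar>pdC C j u * (c * (v$j - u$j) + g j)\<bar> \<le> 2 * eps"
      using abs_pdC_le_1[OF u, of j] shift[of j]
        mult_mono[of "\<bar>pdC C j u\<bar>" 1 "\<bar>c * (v$j - u$j) + g j\<bar>" "2 * eps"]
      by (simp add: abs_mult)
  qed
  have "c * (C v - C u) + \<beta> v - (\<alpha> u - (\<Sum>j\<in>UNIV. pdC C j u * g j))
      = c * (C v - C u - (\<Sum>j\<in>UNIV. pdC C j u * (v$j - u$j)))
        + (\<Sum>j\<in>UNIV. pdC C j u * (c * (v$j - u$j) + g j)) + (\<beta> v - \<alpha> v) + (\<alpha> v - \<alpha> u)"
    by (rule rescaled_increment_split)
  then have "\<bar>c * (C v - C u) + \<beta> v - (\<alpha> u - (\<Sum>j\<in>UNIV. pdC C j u * g j))\<bar>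
      \<le> D * ((A + 1 + 6) * eps) + D * (2 * eps) + eps + eps"
    using T1 T2 \<beta>\<alpha>[OF v] smooth by linarith
  also have "\<dots> \<le> D * (A + 9) * eps + (A + 9) * eps"
    using A eps0 D by (simp add: algebra_simps mult_right_mono)
  also have "\<dots> = (D + 1) * (A + 9) * eps"
    by (simp add: algebra_simps)
  finally show ?thesis
    by (simp add: D_def g_def)
qed

lemma gn_estimate_at:
  assumes n: "1 \<le> n" and Dn: "Dstar_n n C b" and a: "Dstar a"
    and st: "(s, t) \<in> Delta" and u: "u \<in> unit_cube"
    and ba: "\<And>x. x \<in> unit_cube \<Longrightarrow> \<bar>b s t x - a s t x\<bar> < eps" and eps: "eps \<le> 1"
    and A: "\<And>x. x \<in> unit_cube \<Longrightarrow> \<bar>a s t x\<bar> \<le> A"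
    and modulus: "\<And>x y. x \<in> unit_cube \<Longrightarrow> y \<in> unit_cube \<Longrightarrow> dist x y < \<rho> \<Longrightarrow>
      \<bar>a s t x - a s t y\<bar> < eps"
    and band: "\<And>x. t - s < \<rho> \<Longrightarrow> x \<in> unit_cube \<Longrightarrow> \<bar>a s t x\<bar> < eps"
    and expansion: "\<And>v. v \<in> unit_cube \<Longrightarrow> (\<Sum>i\<in>UNIV. \<bar>v$i - u$i\<bar>) < \<delta> \<Longrightarrow>
       \<bar>C v - C u - (\<Sum>j\<in>UNIV. pdC C j u * (v$j - u$j))\<bar>
         \<le> (\<Sum>j\<in>UNIV. (if u$j \<in> {\<rho>..1-\<rho>} then eps else 2) * \<bar>v$j - u$j\<bar>)"
    and \<tau>: "0 < \<tau>" "real CARD('d) * \<tau> < min \<rho> \<delta>"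
    and large: "1 / real n < \<rho> / 2" "A + 1 \<le> sqrt (real n) * (\<rho> / 2) * \<tau>"
  shows "\<bar>gn n C b s t u - glim C a s t u\<bar> \<le> (real CARD('d) + 1) * (A + 9) * eps"
proof -
  define D where "D = real CARD('d)"
  have "0 \<le> A" "0 \<le> eps" "0 \<le> D"
    using A[OF u] ba[OF u] unfolding D_def by linarith+
  then have small_le: "k * ((D + 1) * eps) \<le> (D + 1) * (A + 9) * eps" if "k \<le> 9" for k
    using that mult_right_mono[of k "A + 9" "(D + 1) * eps"] by (simp add: algebra_simps)
  have "s \<le> t" using st by (simp add: Delta_def)
  then have "\<lfloor>real n * s\<rfloor> \<le> \<lfloor>real n * t\<rfloor>"
    by (intro floor_mono mult_left_mono) auto
  then consider "\<lfloor>real n * s\<rfloor> = \<lfloor>real n * t\<rfloor>" | "\<lfloor>real n * s\<rfloor> < \<lfloor>real n * t\<rfloor>"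
    by linarith
  then show ?thesis
  proof cases
    case 1
    have "0 < 1 / real n"
      using n by simp
    then have "t - s < \<rho>"
      using lam_degenerate(2)[OF n 1] large(1) by linarith
    then have "\<bar>glim C a s t u\<bar> \<le> (D + 1) * eps"
      unfolding glim_eq D_def using band by (intro abs_linearization_le[OF u]) (simp add: less_imp_le)
    moreover have "gn n C b s t u = 0"
      by (rule gn_degenerate[OF n Dn st 1])
    ultimately show ?thesis
      using small_le[of 1] unfolding D_def[symmetric] by simp
  next
    case 2
    define c where "c = sqrt (real n) * lam n s t"
    have c: "0 < c"
      using lam_pos[OF n 2] n by (simp add: c_def)
    have "s \<noteq> t" using 2 by auto
    then have "s < t" using \<open>s \<le> t\<close> by simp
    then have b_bdry: "vanishes_on_boundary (b s t)" and a_bdry: "vanishes_on_boundary (a s t)"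
      using Dn a st Dstar_vanishes_on_boundary by (auto simp: Dstar_n_def)
    have gn: "gn n C b s t u = c * (C (marginal_inverse c (b s t) u) - C u)
        + b s t (marginal_inverse c (b s t) u)"
      unfolding c_def by (rule gn_eq_marginal_inverse[OF copula n 2 u])
    show ?thesis
    proof (cases "t - s < \<rho>")
      case True
      show ?thesis
        using rescaled_increment_small[OF u c band[OF True] ba b_bdry] small_le[of 3]
        unfolding gn glim_eq D_def by linarith
    next
      case False
      then have "\<rho> / 2 \<le> lam n s t"
        using lam_ge[OF n, of t s] large(1) by linarith
      then have "sqrt (real n) * (\<rho> / 2) * \<tau> \<le> c * \<tau>"
        unfolding c_def using \<tau>(1) by (intro mult_right_mono mult_left_mono) auto
      then have "A + 1 \<le> c * \<tau>"
        using large(2) by linarith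
      then show ?thesis
        using rescaled_increment_approx[OF u c A ba eps modulus a_bdry b_bdry order_refl expansion \<tau>(2)]
        unfolding gn glim_eq by blast
    qed
  qed
qed

lemma gn_uniform_estimate:
  assumes an: "\<And>n. 1 \<le> n \<Longrightarrow> Dstar_n n C (alpha n)" and a0: "Dstar0 a"
    and conv: "\<forall>\<^sub>F n in sequentially. \<forall>(s,t)\<in>Delta. \<forall>u\<in>unit_cube. \<bar>alpha n s t u - a s t u\<bar> < eps"
    and A: "\<And>s t u. (s, t) \<in> Delta \<Longrightarrow> u \<in> unit_cube \<Longrightarrow> \<bar>a s t u\<bar> \<le> A"
    and eps: "0 < eps" "eps \<le> 1"
  shows "\<forall>\<^sub>F n in sequentially. \<forall>(s,t)\<in>Delta. \<forall>u\<in>unit_cube.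
    \<bar>gn n C (alpha n) s t u - glim C a s t u\<bar> \<le> (real CARD('d) + 1) * (A + 9) * eps"
proof -
  obtain \<rho> where \<rho>: "0 < \<rho>" and modulus:
    "\<And>s t x y. (s, t) \<in> Delta \<Longrightarrow> x \<in> unit_cube \<Longrightarrow> y \<in> unit_cube \<Longrightarrow> dist x y < \<rho> \<Longrightarrow>
       \<bar>a s t x - a s t y\<bar> < eps"
    and band: "\<And>s t x. (s, t) \<in> Delta \<Longrightarrow> t - s < \<rho> \<Longrightarrow> x \<in> unit_cube \<Longrightarrow> \<bar>a s t x\<bar> < eps"
    using Dstar0_modulus[OF a0 eps(1)] by blast
  obtain \<delta> where \<delta>: "0 < \<delta>" and expansion:
    "\<And>u v. u \<in> unit_cube \<Longrightarrow> v \<in> unit_cube \<Longrightarrow> (\<Sum>i\<in>UNIV. \<bar>v$i - u$i\<bar>) < \<delta> \<Longrightarrow>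
       \<bar>C v - C u - (\<Sum>j\<in>UNIV. pdC C j u * (v$j - u$j))\<bar>
         \<le> (\<Sum>j\<in>UNIV. (if u$j \<in> {\<rho>..1-\<rho>} then eps else 2) * \<bar>v$j - u$j\<bar>)"
    using first_order_expansion[OF \<rho> eps(1)] by blast
  define D where "D = real CARD('d)"
  have D: "0 < D" unfolding D_def by simp
  define \<tau> where "\<tau> = min \<rho> \<delta> / (2 * D)"
  have "D * \<tau> = min \<rho> \<delta> / 2"
    using D by (simp add: \<tau>_def)
  moreover have "0 < min \<rho> \<delta>"
    using \<rho> \<delta> by simp
  ultimately have \<tau>: "0 < \<tau>" "D * \<tau> < min \<rho> \<delta>"
    using D by (simp add: \<tau>_def, linarith)
  have "filterlim (\<lambda>n. sqrt (real n)) at_top sequentially"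
    by (rule filterlim_compose[OF sqrt_at_top filterlim_real_sequentially])
  then have "\<forall>\<^sub>F n in sequentially. (A + 1) / ((\<rho> / 2) * \<tau>) \<le> sqrt (real n)"
    by (simp add: filterlim_at_top)
  moreover have "\<forall>\<^sub>F n in sequentially. 2 / \<rho> + 1 \<le> real n"
    using filterlim_real_sequentially by (simp add: filterlim_at_top)
  ultimately have "\<forall>\<^sub>F n in sequentially. 1 \<le> n \<and> 1 / real n < \<rho> / 2 \<and>
      A + 1 \<le> sqrt (real n) * (\<rho> / 2) * \<tau> \<and>
      (\<forall>(s,t)\<in>Delta. \<forall>u\<in>unit_cube. \<bar>alpha n s t u - a s t u\<bar> < eps)"
    using conv eventually_ge_at_top[of 1]
  proof eventually_elim
    case (elim n)
    then have "2 < real n * \<rho>"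
      using \<rho> by (simp add: field_simps)
    moreover have "A + 1 \<le> sqrt (real n) * ((\<rho> / 2) * \<tau>)"
      using elim \<rho> \<tau> by (simp add: pos_divide_le_eq)
    ultimately show ?case
      using elim \<rho> by (simp add: field_simps)
  qed
  then show ?thesis
  proof eventually_elim
    case (elim n)
    show ?case
    proof (intro ballI, clarify)
      fix s t and u :: "real^'d" assume "(s, t) \<in> Delta" "u \<in> unit_cube"
      moreover have "Dstar a"
        using a0 by (simp add: Dstar0_def)
      ultimately show "\<bar>gn n C (alpha n) s t u - glim C a s t u\<bar> \<le> (real CARD('d) + 1) * (A + 9) * eps"
        using elim an modulus band expansion \<tau> A eps(2)
        by (intro gn_estimate_at) (auto simp: D_def)
    qed
  qed
qed

end

theorem lemmaB1:
  fixes C :: "real^'d \<Rightarrow> real"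
    and alpha :: "nat \<Rightarrow> real \<Rightarrow> real \<Rightarrow> real^'d \<Rightarrow> real"
    and a :: "real \<Rightarrow> real \<Rightarrow> real^'d \<Rightarrow> real"
  assumes cop: "is_copula C"
    and diff: "\<And>j u. u \<in> unit_cube \<Longrightarrow> 0 < u$j \<Longrightarrow> u$j < 1 \<Longrightarrow>
                 (\<lambda>x. C (\<chi> i. if i = j then x else u$i)) differentiable (at (u$j))"
    and cont: "\<And>j. continuous_on {u \<in> unit_cube. 0 < u$j \<and> u$j < 1} (pdC C j)"
    and an: "\<And>n. n \<ge> 1 \<Longrightarrow> Dstar_n n C (alpha n)"
    and a0: "Dstar0 a"
    and conv: "\<And>e. e > 0 \<Longrightarrow> \<forall>\<^sub>F n in sequentially.
                 \<forall>(s,t)\<in>Delta. \<forall>u\<in>unit_cube. \<bar>alpha n s t u - a s t u\<bar> < e"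
  shows "\<forall>e>0. \<forall>\<^sub>F n in sequentially.
           \<forall>(s,t)\<in>Delta. \<forall>u\<in>unit_cube. \<bar>gn n C (alpha n) s t u - glim C a s t u\<bar> < e"
proof (intro allI impI)
  fix e :: real assume e: "e > 0"
  interpret smooth_copula C
    using cop diff cont by unfold_locales
  obtain A where A: "\<And>s t u. (s, t) \<in> Delta \<Longrightarrow> u \<in> unit_cube \<Longrightarrow> \<bar>a s t u\<bar> \<le> \<bar>A\<bar>"
    using a0 unfolding Dstar0_def Dstar_def by (fastforce intro: order_trans[OF _ abs_ge_self])
  define K where "K = (real CARD('d) + 1) * (\<bar>A\<bar> + 9)"
  have K: "0 < K" unfolding K_def by (simp add: add_pos_nonneg)
  define eps where "eps = min 1 (e / (2 * K))"
  have eps: "0 < eps" "eps \<le> 1" "K * eps < e"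
    using e K by (auto simp: eps_def min_def field_simps)
  show "\<forall>\<^sub>F n in sequentially.
      \<forall>(s,t)\<in>Delta. \<forall>u\<in>unit_cube. \<bar>gn n C (alpha n) s t u - glim C a s t u\<bar> < e"
  proof (rule eventually_mono)
    show "\<forall>\<^sub>F n in sequentially. \<forall>(s,t)\<in>Delta. \<forall>u\<in>unit_cube.
        \<bar>gn n C (alpha n) s t u - glim C a s t u\<bar> \<le> K * eps"
      unfolding K_def by (rule gn_uniform_estimate) (use an a0 conv A eps in auto)
  qed (use eps(3) in fastforce)
qed

end
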